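(* $\mathrm{CH}_1=\mathrm{CH}^{\varepsilon}_1$: a language is recognised by a history-deterministic $1$-VASS without $\varepsilon$-transitions under coverability acceptance if and only if it is recognised by a history-deterministic $1$-VASS with $\varepsilon$-transitions under coverability acceptance.
   Context: Fix a finite alphabet $\Sigma$. A $k$-VASS with $\varepsilon$-transitions is a tuple $(Q,q_0,F,\delta)$ with $Q$ a finite set of states, $q_0\in Q$ initial, $F\subseteq Q$ accepting, and $\delta\subseteq Q\times(\Sigma\cup\{\varepsilon\})\times\mathbb{Z}^k\times Q$ finite. A run is a sequence of transitions $(p_{i-1},\ell_i,d_i,p_i)$ with $p_0=q_0$ such that the counter vectors $v_0=\vec 0$, $v_i=v_{i-1}+d_i$ all lie in $\mathbb{N}^k$; it is a run on the word obtained by concatenating the labels $\ell_i$ (with $\varepsilon$ the empty word). Under coverability acceptance a run is accepting if its last state is in $F$; the language is the set of words having an accepting run. A VASS without $\varepsilon$-transitions is one with $\delta\subseteq Q\times\Sigma\times\mathbb{Z}^k\times Q$. A VASS (possibly with $\varepsilon$-transitions) is history-deterministic if there is a resolver which, given the run prefix built so far and the next input letter $a$, chooses a finite sequence of $\varepsilon$-transitions followed by one transition labelled $a$, and which at the end of the input chooses a final finite sequence of $\varepsilon$-transitions, such that for every word $w$ in the language the sequence of transitions so produced on $w$ is a run (counters stay nonnegative) and is accepting. (Without $\varepsilon$-transitions this is a function choosing one transition labelled $a$ at each step.) $\mathrm{CH}_1$ denotes the class of languages recognised by history-deterministic $1$-VASS without $\varepsilon$-transitions under coverability acceptance, and $\mathrm{CH}^{\varepsilon}_1$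 the class recognised by history-deterministic $1$-VASS with $\varepsilon$-transitions under coverability acceptance. *)

theory Defs
  imports Main
begin

text \<open>1-VASS with (possibly) epsilon-transitions over alphabet 'a.
  States are natural numbers; a transition is (source, label, update, target),
  label None = epsilon, Some a = letter a.\<close>

type_synonym 'a trans = "nat \<times> 'a option \<times> int \<times> nat"

record 'a vass1 =
  states :: "nat set"
  init :: nat
  final :: "nat set"
  delta :: "'a trans set"

definition wf_vass :: "'a vass1 \<Rightarrow> bool" where
  "wf_vass A \<longleftrightarrow> finite (states A) \<and> init A \<in> states A \<and> final A \<subseteq> states A
     \<and> finite (delta A)
     \<and> (\<forall>(p,l,d,q)\<in>delta A. p \<in> states A \<and> q \<in> states A)"

definition no_eps :: "'a vass1 \<Rightarrow> bool" where
  "no_eps A \<longleftrightarrow> (\<forall>(p,l,d,q)\<in>delta A. l \<noteq> None)"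

fun src :: "'a trans \<Rightarrow> nat" where "src (p,l,d,q) = p"
fun lbl :: "'a trans \<Rightarrow> 'a option" where "lbl (p,l,d,q) = l"
fun upd :: "'a trans \<Rightarrow> int" where "upd (p,l,d,q) = d"
fun tgt :: "'a trans \<Rightarrow> nat" where "tgt (p,l,d,q) = q"

fun chain_from :: "nat \<Rightarrow> 'a trans list \<Rightarrow> bool" where
  "chain_from p [] = True"
| "chain_from p (t # ts) = (src t = p \<and> chain_from (tgt t) ts)"

definition is_run :: "'a vass1 \<Rightarrow> 'a trans list \<Rightarrow> bool" where
  "is_run A \<rho> \<longleftrightarrow> set \<rho> \<subseteq> delta A \<and> chain_from (init A) \<rho>
     \<and> (\<forall>i \<le> length \<rho>. 0 \<le> sum_list (map upd (take i \<rho>)))"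

definition last_state :: "'a vass1 \<Rightarrow> 'a trans list \<Rightarrow> nat" where
  "last_state A \<rho> = (if \<rho> = [] then init A else tgt (last \<rho>))"

definition run_word :: "'a trans list \<Rightarrow> 'a list" where
  "run_word \<rho> = concat (map (\<lambda>t. case lbl t of None \<Rightarrow> [] | Some a \<Rightarrow> [a]) \<rho>)"

definition accepting :: "'a vass1 \<Rightarrow> 'a trans list \<Rightarrow> bool" where
  "accepting A \<rho> \<longleftrightarrow> is_run A \<rho> \<and> last_state A \<rho> \<in> final A"

text \<open>Language under coverability acceptance.\<close>
definition lang :: "'a vass1 \<Rightarrow> 'a list set" where
  "lang A = {w. \<exists>\<rho>. accepting A \<rho> \<and> run_word \<rho> = w}"

definition valid_resolver :: "'a vass1 \<Rightarrow> ('a trans list \<Rightarrow> 'a \<Rightarrow> 'a trans list)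
    \<Rightarrow> ('a trans list \<Rightarrow> 'a trans list) \<Rightarrow> bool" where
  "valid_resolver A r fin \<longleftrightarrow>
     (\<forall>\<rho> a. \<exists>es t. r \<rho> a = es @ [t] \<and> set es \<subseteq> delta A \<and> (\<forall>e\<in>set es. lbl e = None)
                  \<and> t \<in> delta A \<and> lbl t = Some a)
   \<and> (\<forall>\<rho>. set (fin \<rho>) \<subseteq> delta A \<and> (\<forall>e\<in>set (fin \<rho>). lbl e = None))"

definition resolver_prefix :: "('a trans list \<Rightarrow> 'a \<Rightarrow> 'a trans list) \<Rightarrow> 'a list \<Rightarrow> 'a trans list" where
  "resolver_prefix r w = foldl (\<lambda>\<rho> a. \<rho> @ r \<rho> a) [] w"

definition resolver_run :: "('a trans list \<Rightarrow> 'a \<Rightarrow> 'a trans list)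
    \<Rightarrow> ('a trans list \<Rightarrow> 'a trans list) \<Rightarrow> 'a list \<Rightarrow> 'a trans list" where
  "resolver_run r fin w = resolver_prefix r w @ fin (resolver_prefix r w)"

definition history_deterministic :: "'a vass1 \<Rightarrow> bool" where
  "history_deterministic A \<longleftrightarrow>
     (\<exists>r fin. valid_resolver A r fin \<and>
        (\<forall>w \<in> lang A. accepting A (resolver_run r fin w)))"

definition CH1 :: "('a::finite) list set set" where
  "CH1 = {L. \<exists>A. wf_vass A \<and> no_eps A \<and> history_deterministic A \<and> lang A = L}"

definition CH1_eps :: "('a::finite) list set set" where
  "CH1_eps = {L. \<exists>A. wf_vass A \<and> history_deterministic A \<and> lang A = L}"

end

theory Submission
  imports Defs "HOL-Library.Nat_Bijection"
begin

(*
  The epsilon-free automaton simulates A by macro steps: a block of epsilon-transitions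
  followed by one letter. A macro step can dip the counter below its final value, so it is
  enabled only from large enough counter values, and the counter value of A cannot simply be
  copied. Instead small counter values are kept in the control: at level m below a threshold K
  the counter of A is at most m, at level K it is at most K plus the counter of the new
  automaton, and every macro step applies the largest effect enabled from the current level.
  Pumping epsilon-cycles shows that for K large enough a macro step enabled from some counter
  value is either dominated by one enabled from K or has unbounded effects; in the latter case
  A can reach arbitrarily large counter values, and the simulation moves to a level omega that
  tracks control states only. Along the run picked by A's resolver the new counter thus
  dominates A's, which gives a resolver for the new automaton; conversely every run of the new
  automaton is matched by a run of A with at least its counter, so no word is added.
*)

section \<open>Feasible paths and pumping\<close>

fun end_state :: "nat \<Rightarrow> 'a trans list \<Rightarrow> nat" where
  "end_state p [] = p"
| "end_state p (t # ts) = end_state (tgt t) ts"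

definition effect :: "'a trans list \<Rightarrow> int" where
  "effect \<pi> = sum_list (map upd \<pi>)"

fun feasible :: "int \<Rightarrow> 'a trans list \<Rightarrow> bool" where
  "feasible c [] \<longleftrightarrow> 0 \<le> c"
| "feasible c (t # ts) \<longleftrightarrow> 0 \<le> c \<and> feasible (c + upd t) ts"

lemma effect_simps [simp]:
  "effect [] = 0" "effect (t # ts) = upd t + effect ts" "effect (xs @ ys) = effect xs + effect ys"
  by (auto simp: effect_def)

lemma effect_concat_replicate [simp]: "effect (concat (replicate k \<beta>)) = int k * effect \<beta>"
  by (induction k) (auto simp: algebra_simps)

lemma chain_from_append [simp]:
  "chain_from p (xs @ ys) \<longleftrightarrow> chain_from p xs \<and> chain_from (end_state p xs) ys"
  by (induction xs arbitrary: p) auto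

lemma end_state_append [simp]: "end_state p (xs @ ys) = end_state (end_state p xs) ys"
  by (induction xs arbitrary: p) auto

lemma end_state_eq_last: "end_state p \<pi> = (if \<pi> = [] then p else tgt (last \<pi>))"
  by (induction \<pi> arbitrary: p) auto

lemma end_state_closed:
  "p \<in> S \<Longrightarrow> tgt ` set \<pi> \<subseteq> S \<Longrightarrow> end_state p \<pi> \<in> S"
  by (induction \<pi> arbitrary: p) auto

lemma feasible_nonneg: "feasible c \<pi> \<Longrightarrow> 0 \<le> c"
  by (cases \<pi>) auto

lemma feasible_mono: "feasible c \<pi> \<Longrightarrow> c \<le> c' \<Longrightarrow> feasible c' \<pi>"
  by (induction \<pi> arbitrary: c c') force+

lemma feasible_append [simp]:
  "feasible c (xs @ ys) \<longleftrightarrow> feasible c xs \<and> feasible (c + effect xs) ys"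
  by (induction xs arbitrary: c) (auto simp: add.assoc feasible_nonneg)

lemma feasible_final_nonneg: "feasible c \<pi> \<Longrightarrow> 0 \<le> c + effect \<pi>"
  using feasible_append[of c \<pi> "[]"] by simp

lemma feasible_iff_prefix_sums:
  "feasible c \<pi> \<longleftrightarrow> (\<forall>i \<le> length \<pi>. 0 \<le> c + sum_list (map upd (take i \<pi>)))"
proof (induction \<pi> arbitrary: c)
  case (Cons t ts)
  have "(\<forall>i \<le> length (t # ts). 0 \<le> c + sum_list (map upd (take i (t # ts))))
    \<longleftrightarrow> 0 \<le> c \<and> (\<forall>i \<le> length ts. 0 \<le> c + upd t + sum_list (map upd (take i ts)))"
    (is "(\<forall>i \<le> _. ?P i) \<longleftrightarrow> _")
  proof
    assume "\<forall>i \<le> length (t # ts). ?P i"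
    then show "0 \<le> c \<and> (\<forall>i \<le> length ts. 0 \<le> c + upd t + sum_list (map upd (take i ts)))"
      by (force simp: add.assoc dest: spec[of _ 0] spec[of _ "Suc _"])
  next
    assume "0 \<le> c \<and> (\<forall>i \<le> length ts. 0 \<le> c + upd t + sum_list (map upd (take i ts)))"
    then show "\<forall>i \<le> length (t # ts). ?P i"
      by (auto simp: add.assoc take_Cons' split: nat.split)
  qed
  then show ?case
    using Cons by simp
qed simp

lemma feasible_concat_replicate:
  "feasible c \<beta> \<Longrightarrow> 0 \<le> effect \<beta> \<Longrightarrow> feasible c (concat (replicate k \<beta>))"
proof (induction k arbitrary: c)
  case (Suc k)
  then have "feasible (c + effect \<beta>) \<beta>"
    by (auto intro: feasible_mono)
  then show ?case
    using Suc by simp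
qed (simp add: feasible_nonneg)

lemma feasible_of_abs_bound:
  assumes "\<forall>t\<in>set \<pi>. \<bar>upd t\<bar> \<le> B"
  shows "feasible (int (length \<pi>) * B) \<pi>"
  using assms
proof (induction \<pi>)
  case (Cons t ts)
  have "feasible (int (length ts) * B) ts"
    using Cons by simp
  moreover have "int (length ts) * B \<le> int (length (t # ts)) * B + upd t"
    using Cons.prems by (simp add: algebra_simps) linarith
  moreover have "0 \<le> B"
    using Cons.prems by fastforce
  ultimately show ?case
    by (auto intro: feasible_mono)
qed simp

lemma chain_concat_replicate:
  assumes "chain_from x \<beta>" "end_state x \<beta> = x"
  shows "chain_from x (concat (replicate k \<beta>)) \<and> end_state x (concat (replicate k \<beta>)) = x"
  using assms by (induction k) auto

definition feasible_path :: "'a trans set \<Rightarrow> nat \<Rightarrow> int \<Rightarrow> nat \<Rightarrow> 'a trans list \<Rightarrow> bool" where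
  "feasible_path T p c q \<pi> \<longleftrightarrow> set \<pi> \<subseteq> T \<and> chain_from p \<pi> \<and> end_state p \<pi> = q \<and> feasible c \<pi>"

lemma long_path_has_cycle:
  assumes "finite S" "src ` set \<pi> \<subseteq> S" "chain_from p \<pi>" "card S < length \<pi>"
  obtains \<alpha> \<beta> \<gamma> where "\<pi> = \<alpha> @ \<beta> @ \<gamma>" "\<beta> \<noteq> []" "end_state (end_state p \<alpha>) \<beta> = end_state p \<alpha>"
proof -
  have "card (set (map src \<pi>)) < length (map src \<pi>)"
    using assms(1,2,4) card_mono[of S "src ` set \<pi>"] by simp
  then have "\<not> distinct (map src \<pi>)"
    using distinct_card by fastforce
  then obtain xs y ys zs where "map src \<pi> = xs @ (y # ys @ y # zs)"
    using not_distinct_decomp by fastforce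
  then obtain \<alpha> \<pi>\<^sub>1 where "\<pi> = \<alpha> @ \<pi>\<^sub>1" "y # ys @ y # zs = map src \<pi>\<^sub>1"
    unfolding map_eq_append_conv by metis
  moreover from this(2) obtain t \<pi>\<^sub>2 where "\<pi>\<^sub>1 = t # \<pi>\<^sub>2" "y = src t" "ys @ y # zs = map src \<pi>\<^sub>2"
    unfolding Cons_eq_map_conv by metis
  moreover from this(3)[symmetric] obtain \<beta> \<pi>\<^sub>3 where "\<pi>\<^sub>2 = \<beta> @ \<pi>\<^sub>3" "y # zs = map src \<pi>\<^sub>3"
    unfolding map_eq_append_conv by metis
  moreover from this(2) obtain t' \<gamma> where "\<pi>\<^sub>3 = t' # \<gamma>" "y = src t'"
    unfolding Cons_eq_map_conv by metis
  ultimately have split: "\<pi> = \<alpha> @ (t # \<beta>) @ (t' # \<gamma>)" and "src t = src t'"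
    by simp_all
  then have "end_state (end_state p \<alpha>) (t # \<beta>) = end_state p \<alpha>"
    using assms(3) by simp
  then show ?thesis
    using that split by blast
qed

lemma feasible_path_cut_cycle:
  assumes "feasible_path T p c q (\<alpha> @ \<beta> @ \<gamma>)" "end_state (end_state p \<alpha>) \<beta> = end_state p \<alpha>"
    and "effect \<beta> \<le> 0"
  shows "feasible_path T p c q (\<alpha> @ \<gamma>)"
proof -
  have "feasible (c + effect \<alpha>) \<gamma>"
    using assms by (auto simp: feasible_path_def add.assoc intro: feasible_mono)
  then show ?thesis
    using assms(1,2) by (auto simp: feasible_path_def)
qed

lemma feasible_path_pump_cycle:
  assumes "feasible_path T p c q (\<alpha> @ \<beta> @ \<gamma>)" "end_state (end_state p \<alpha>) \<beta> = end_state p \<alpha>"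
    and "0 \<le> effect \<beta>" "1 \<le> k"
  shows "feasible_path T p c q (\<alpha> @ concat (replicate k \<beta>) @ \<gamma>)"
proof -
  let ?x = "end_state p \<alpha>" and ?\<beta>k = "concat (replicate k \<beta>)"
  have "chain_from ?x ?\<beta>k" "end_state ?x ?\<beta>k = ?x" "set ?\<beta>k \<subseteq> set \<beta>"
    using assms(1,2) chain_concat_replicate[of ?x \<beta> k] by (auto simp: feasible_path_def)
  moreover have "feasible (c + effect \<alpha>) ?\<beta>k"
    using assms(1,3) feasible_concat_replicate by (auto simp: feasible_path_def)
  moreover have "c + effect \<alpha> + effect \<beta> \<le> c + effect \<alpha> + int k * effect \<beta>"
    using assms(3,4) mult_right_mono[of 1 "int k" "effect \<beta>"] by simp
  then have "feasible (c + effect \<alpha> + int k * effect \<beta>) \<gamma>"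
    using assms(1) by (auto simp: feasible_path_def add.assoc intro: feasible_mono)
  ultimately show ?thesis
    using assms(1,2) by (auto simp: feasible_path_def add.assoc)
qed

(* Cut out cycles of non-positive effect; pump a cycle of positive effect. *)
lemma feasible_path_short_or_unbounded:
  assumes "finite S" "src ` T \<subseteq> S" "feasible_path T p c q \<pi>"
  shows "(\<exists>\<pi>'. feasible_path T p c q \<pi>' \<and> effect \<pi> \<le> effect \<pi>' \<and> length \<pi>' \<le> card S)
    \<or> (\<forall>M. \<exists>\<pi>'. feasible_path T p c q \<pi>' \<and> M \<le> effect \<pi>')"
  using assms(3)
proof (induction "length \<pi>" arbitrary: \<pi> rule: less_induct)
  case less
  show ?case
  proof (cases "length \<pi> \<le> card S")
    case False
    then obtain \<alpha> \<beta> \<gamma> where split: "\<pi> = \<alpha> @ \<beta> @ \<gamma>" "\<beta> \<noteq> []"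
      and cycle: "end_state (end_state p \<alpha>) \<beta> = end_state p \<alpha>"
      using long_path_has_cycle[OF assms(1), of \<pi> p] assms(2) less.prems
      unfolding feasible_path_def by (metis image_mono not_le order_trans)
    show ?thesis
    proof (cases "effect \<beta> \<le> 0")
      case True
      then have "feasible_path T p c q (\<alpha> @ \<gamma>)"
        using feasible_path_cut_cycle less.prems split cycle by blast
      moreover have "length (\<alpha> @ \<gamma>) < length \<pi>" "effect \<pi> \<le> effect (\<alpha> @ \<gamma>)"
        using split True by auto
      ultimately show ?thesis
        using less.hyps by (meson order_trans)
    next
      case False
      have "\<exists>\<pi>'. feasible_path T p c q \<pi>' \<and> M \<le> effect \<pi>'" for M
      proof -
        define k where "k = nat (M - effect \<pi>) + 1"
        let ?\<pi> = "\<alpha> @ concat (replicate k \<beta>) @ \<gamma>"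
        have "feasible_path T p c q ?\<pi>"
          using feasible_path_pump_cycle[of T p c q \<alpha> \<beta> \<gamma> k] less.prems split cycle False
          unfolding k_def by simp
        moreover have "effect ?\<pi> = effect \<pi> + (int k - 1) * effect \<beta>"
          using split by (simp add: algebra_simps)
        moreover have "M - effect \<pi> \<le> int k - 1" "0 \<le> int k - 1"
          unfolding k_def by simp_all
        then have "M - effect \<pi> \<le> (int k - 1) * effect \<beta>"
          using False mult_left_mono[of 1 "effect \<beta>" "int k - 1"] by simp
        ultimately show ?thesis
          by (intro exI[of _ ?\<pi>]) simp
      qed
      then show ?thesis
        by blast
    qed
  qed (use less.prems in auto)
qed

section \<open>Runs and macro steps\<close>

lemma is_run_iff_feasible:
  "is_run A \<rho> \<longleftrightarrow> set \<rho> \<subseteq> delta A \<and> chain_from (init A) \<rho> \<and> feasible 0 \<rho>"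
  unfolding is_run_def feasible_iff_prefix_sums by simp

lemma last_state_eq_end_state: "last_state A \<rho> = end_state (init A) \<rho>"
  unfolding last_state_def end_state_eq_last by simp

lemma is_run_append:
  "is_run A (\<rho> @ \<pi>) \<longleftrightarrow>
     is_run A \<rho> \<and> set \<pi> \<subseteq> delta A \<and> chain_from (last_state A \<rho>) \<pi> \<and> feasible (effect \<rho>) \<pi>"
  unfolding is_run_iff_feasible last_state_eq_end_state by auto

lemma last_state_append: "last_state A (\<rho> @ \<pi>) = end_state (last_state A \<rho>) \<pi>"
  unfolding last_state_eq_end_state by simp

lemma effect_run_nonneg: "is_run A \<rho> \<Longrightarrow> 0 \<le> effect \<rho>"
  unfolding is_run_iff_feasible using feasible_final_nonneg by fastforce

lemma wf_vass_trans_states: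
  "wf_vass A \<Longrightarrow> t \<in> delta A \<Longrightarrow> src t \<in> states A \<and> tgt t \<in> states A"
  unfolding wf_vass_def by (cases t) auto

lemma last_state_in_states:
  assumes "wf_vass A" "is_run A \<rho>"
  shows "last_state A \<rho> \<in> states A"
proof -
  have "tgt ` set \<rho> \<subseteq> states A"
    using assms wf_vass_trans_states unfolding is_run_iff_feasible by blast
  then show ?thesis
    unfolding last_state_eq_end_state using assms(1) end_state_closed wf_vass_def by blast
qed

lemma run_word_simps [simp]:
  "run_word [] = []"
  "run_word (xs @ ys) = run_word xs @ run_word ys"
  "run_word (t # ts) = (case lbl t of None \<Rightarrow> [] | Some a \<Rightarrow> [a]) @ run_word ts"
  by (auto simp: run_word_def)

lemma run_word_eps: "\<forall>e\<in>set es. lbl e = None \<Longrightarrow> run_word es = []"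
  by (induction es) auto

definition eps_trans :: "'a vass1 \<Rightarrow> 'a trans set" where
  "eps_trans A = {t \<in> delta A. lbl t = None}"

definition macro_step :: "'a vass1 \<Rightarrow> nat \<Rightarrow> 'a \<Rightarrow> nat \<Rightarrow> 'a trans list \<Rightarrow> bool" where
  "macro_step A p a q \<pi> \<longleftrightarrow> (\<exists>es t. \<pi> = es @ [t] \<and> set es \<subseteq> eps_trans A \<and> chain_from p es
     \<and> t \<in> delta A \<and> src t = end_state p es \<and> lbl t = Some a \<and> tgt t = q)"

definition macro_effects :: "'a vass1 \<Rightarrow> nat \<Rightarrow> 'a \<Rightarrow> nat \<Rightarrow> nat \<Rightarrow> int set" where
  "macro_effects A p a q c = effect ` {\<pi>. macro_step A p a q \<pi> \<and> feasible (int c) \<pi>}"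

definition can_accept :: "'a vass1 \<Rightarrow> nat \<Rightarrow> nat \<Rightarrow> bool" where
  "can_accept A p c \<longleftrightarrow> (\<exists>\<phi>. set \<phi> \<subseteq> eps_trans A \<and> chain_from p \<phi> \<and> end_state p \<phi> \<in> final A
     \<and> feasible (int c) \<phi>)"

lemma macro_step_snoc_iff:
  "macro_step A p a q (es @ [t]) \<longleftrightarrow> set es \<subseteq> eps_trans A \<and> chain_from p es
     \<and> t \<in> delta A \<and> src t = end_state p es \<and> lbl t = Some a \<and> tgt t = q"
  unfolding macro_step_def by auto

lemma macro_step_run:
  assumes "macro_step A p a q \<pi>"
  shows "set \<pi> \<subseteq> delta A \<and> chain_from p \<pi> \<and> end_state p \<pi> = q \<and> run_word \<pi> = [a]"
proof -
  obtain es t where "\<pi> = es @ [t]" "set es \<subseteq> eps_trans A" "chain_from p es" "t \<in> delta A"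
    "src t = end_state p es" "lbl t = Some a" "tgt t = q"
    using assms unfolding macro_step_def by blast
  moreover have "run_word es = []"
    using \<open>set es \<subseteq> eps_trans A\<close> run_word_eps unfolding eps_trans_def by blast
  ultimately show ?thesis
    unfolding eps_trans_def by auto
qed

lemma macro_effects_mono: "c \<le> c' \<Longrightarrow> macro_effects A p a q c \<subseteq> macro_effects A p a q c'"
  unfolding macro_effects_def by (rule image_mono) (auto intro: feasible_mono)

lemma unbounded_macro_effects_mono:
  "\<not> bdd_above (macro_effects A p a q c) \<Longrightarrow> c \<le> c' \<Longrightarrow> \<not> bdd_above (macro_effects A p a q c')"
  by (meson bdd_above_mono macro_effects_mono)

lemma can_accept_mono: "can_accept A p c \<Longrightarrow> c \<le> c' \<Longrightarrow> can_accept A p c'"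
  unfolding can_accept_def by (meson feasible_mono of_nat_le_iff)

section \<open>The threshold\<close>

definition total_abs_update :: "'a vass1 \<Rightarrow> int" where
  "total_abs_update A = (\<Sum>t\<in>delta A. \<bar>upd t\<bar>)"

lemma feasible_by_total_abs_update:
  assumes "wf_vass A" "set \<pi> \<subseteq> delta A"
  shows "feasible (int (length \<pi>) * total_abs_update A) \<pi>"
proof (rule feasible_of_abs_bound, rule ballI)
  fix t assume "t \<in> set \<pi>"
  then show "\<bar>upd t\<bar> \<le> total_abs_update A"
    using assms unfolding total_abs_update_def wf_vass_def
    by (intro member_le_sum[where f = "\<lambda>t. \<bar>upd t\<bar>"]) auto
qed

lemma eventually_of_upward_closed:
  assumes "\<And>c c'. P c \<Longrightarrow> c \<le> c' \<Longrightarrow> P c'"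
  shows "eventually (\<lambda>K. (\<exists>c. P c) \<longrightarrow> P K) sequentially"
proof (cases "\<exists>c. P c")
  case True
  then obtain c where "P c" ..
  then show ?thesis
    using assms by (auto intro: eventually_sequentiallyI[of c])
qed simp

definition sufficient_threshold :: "('a::finite) vass1 \<Rightarrow> nat \<Rightarrow> bool" where
  "sufficient_threshold A K \<longleftrightarrow> (card (states A) + 1) * nat (total_abs_update A) \<le> K
     \<and> (\<forall>p \<in> states A. \<forall>a. \<forall>q \<in> states A.
          (\<exists>c. \<not> bdd_above (macro_effects A p a q c)) \<longrightarrow> \<not> bdd_above (macro_effects A p a q K))
     \<and> (\<forall>p \<in> states A. (\<exists>c. can_accept A p c) \<longrightarrow> can_accept A p K)"

definition threshold :: "('a::finite) vass1 \<Rightarrow> nat" where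
  "threshold A = (SOME K. sufficient_threshold A K)"

lemma eventually_sufficient_threshold:
  fixes A :: "('a::finite) vass1"
  assumes "wf_vass A"
  shows "eventually (sufficient_threshold A) sequentially"
proof -
  have fin: "finite (states A)"
    using assms unfolding wf_vass_def by simp
  have "eventually (\<lambda>K. (\<exists>c. \<not> bdd_above (macro_effects A p a q c))
      \<longrightarrow> \<not> bdd_above (macro_effects A p a q K)) sequentially" for p a q
    by (rule eventually_of_upward_closed) (rule unbounded_macro_effects_mono)
  moreover have "eventually (\<lambda>K. (\<exists>c. can_accept A p c) \<longrightarrow> can_accept A p K) sequentially" for p
    by (rule eventually_of_upward_closed) (rule can_accept_mono)
  ultimately show ?thesis
    unfolding sufficient_threshold_def
    by (intro eventually_conj eventually_ge_at_top eventually_ball_finite eventually_all_finite fin ballI)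
qed

lemma sufficient_threshold: "wf_vass A \<Longrightarrow> sufficient_threshold A (threshold A)"
  unfolding threshold_def
  by (rule someI_ex, rule eventually_happens'[OF sequentially_bot eventually_sufficient_threshold])

lemma short_path_feasible_at_threshold:
  assumes "wf_vass A" "set \<pi> \<subseteq> delta A" "length \<pi> \<le> card (states A) + 1"
  shows "feasible (int (threshold A)) \<pi>"
proof -
  have "0 \<le> total_abs_update A"
    unfolding total_abs_update_def by (simp add: sum_nonneg)
  then have "int (length \<pi>) * total_abs_update A \<le> int (card (states A) + 1) * total_abs_update A"
    using assms(3) by (intro mult_right_mono) simp_all
  also have "\<dots> = int ((card (states A) + 1) * nat (total_abs_update A))"
    using \<open>0 \<le> total_abs_update A\<close> by (simp add: algebra_simps)
  also have "\<dots> \<le> int (threshold A)"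
    using sufficient_threshold[OF assms(1)] unfolding sufficient_threshold_def of_nat_le_iff by blast
  finally show ?thesis
    using feasible_by_total_abs_update[OF assms(1,2)] feasible_mono by blast
qed

lemma unbounded_at_threshold:
  assumes "wf_vass A" "p \<in> states A" "q \<in> states A" "\<not> bdd_above (macro_effects A p a q c)"
  shows "\<not> bdd_above (macro_effects A p a q (threshold A))"
  using sufficient_threshold[OF assms(1)] assms(2-4) unfolding sufficient_threshold_def by fastforce

lemma can_accept_at_threshold:
  assumes "wf_vass A" "p \<in> states A" "can_accept A p c"
  shows "can_accept A p (threshold A)"
  using sufficient_threshold[OF assms(1)] assms(2,3) unfolding sufficient_threshold_def by auto

lemma Sup_int_mem:
  fixes X :: "int set"
  assumes "X \<noteq> {}" "bdd_above X"
  shows "Sup X \<in> X"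
proof -
  obtain x where "x \<in> X" "Sup X - 1 < x"
    using less_cSup_iff[OF assms, of "Sup X - 1"] by auto
  moreover have "x \<le> Sup X"
    using \<open>x \<in> X\<close> assms(2) by (rule cSup_upper)
  ultimately have "x = Sup X"
    by linarith
  then show ?thesis
    using \<open>x \<in> X\<close> by simp
qed

lemma not_bdd_above_int_iff: "\<not> bdd_above (X :: int set) \<longleftrightarrow> (\<forall>M. \<exists>x\<in>X. M \<le> x)"
  unfolding bdd_above_def by (meson not_le order.strict_implies_order zle_add1_eq_le)

lemma unbounded_macro_effects_of_pumpable_prefix:
  assumes "\<forall>M. \<exists>es'. feasible_path (eps_trans A) p (int c) (src t) es' \<and> M \<le> effect es'"
    and "macro_step A p a q (es @ [t])"
  shows "\<not> bdd_above (macro_effects A p a q c)"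
  unfolding not_bdd_above_int_iff
proof
  fix M
  obtain es' where es': "feasible_path (eps_trans A) p (int c) (src t) es'" "\<bar>M\<bar> + \<bar>upd t\<bar> \<le> effect es'"
    using assms(1) by blast
  have "macro_step A p a q (es' @ [t])"
    using assms(2) es'(1) unfolding feasible_path_def macro_step_snoc_iff by simp
  moreover have "feasible (int c) (es' @ [t])"
    using es' unfolding feasible_path_def by simp
  ultimately show "\<exists>x \<in> macro_effects A p a q c. M \<le> x"
    using es'(2) unfolding macro_effects_def by force
qed

lemma macro_effect_dominated_at_threshold:
  assumes wf: "wf_vass A" and "p \<in> states A" "q \<in> states A" and "e \<in> macro_effects A p a q c"
  shows "\<exists>e' \<in> macro_effects A p a q (threshold A). e \<le> e'"
proof -
  obtain es t where \<pi>: "macro_step A p a q (es @ [t])" "feasible (int c) (es @ [t])" "e = effect (es @ [t])"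
    using assms(4) unfolding macro_effects_def macro_step_def by blast
  then have path: "feasible_path (eps_trans A) p (int c) (src t) es"
    unfolding feasible_path_def macro_step_snoc_iff by simp
  have "finite (states A)" "src ` eps_trans A \<subseteq> states A"
    using wf wf_vass_trans_states unfolding wf_vass_def eps_trans_def by auto
  from feasible_path_short_or_unbounded[OF this path] show ?thesis
  proof
    assume "\<exists>es'. feasible_path (eps_trans A) p (int c) (src t) es'
      \<and> effect es \<le> effect es' \<and> length es' \<le> card (states A)"
    then obtain es' where es': "feasible_path (eps_trans A) p (int c) (src t) es'"
      "effect es \<le> effect es'" "length es' \<le> card (states A)"
      by blast
    have step: "macro_step A p a q (es' @ [t])"
      using \<pi>(1) es'(1) unfolding feasible_path_def macro_step_snoc_iff by simp
    moreover have "feasible (int (threshold A)) (es' @ [t])"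
      by (rule short_path_feasible_at_threshold[OF wf]) (use macro_step_run[OF step] es'(3) in auto)
    ultimately have "effect (es' @ [t]) \<in> macro_effects A p a q (threshold A)"
      unfolding macro_effects_def by blast
    moreover have "e \<le> effect (es' @ [t])"
      using \<pi>(3) es'(2) by simp
    ultimately show ?thesis ..
  next
    assume "\<forall>M. \<exists>es'. feasible_path (eps_trans A) p (int c) (src t) es' \<and> M \<le> effect es'"
    then have "\<not> bdd_above (macro_effects A p a q c)"
      using \<pi>(1) by (rule unbounded_macro_effects_of_pumpable_prefix)
    then show ?thesis
      using unbounded_at_threshold[OF assms(1-3)] unfolding not_bdd_above_int_iff by blast
  qed
qed

section \<open>The epsilon-free automaton\<close>

(* Levels up to threshold A keep small counter values of A in the control; level omega A
   records that A can reach arbitrarily large counter values. *)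
abbreviation omega :: "('a::finite) vass1 \<Rightarrow> nat" where
  "omega A \<equiv> Suc (threshold A)"

definition encode_state :: "nat \<Rightarrow> nat \<Rightarrow> nat" where
  "encode_state p m = prod_encode (p, m)"

lemma prod_decode_encode_state [simp]: "prod_decode (encode_state p m) = (p, m)"
  unfolding encode_state_def by simp

lemma encode_state_eq_iff [simp]: "encode_state p m = encode_state p' m' \<longleftrightarrow> p = p' \<and> m = m'"
  unfolding encode_state_def using prod_encode_eq by blast

(* The target level m' is left to the resolver, see eps_free_step below. *)
definition bounded_steps :: "('a::finite) vass1 \<Rightarrow> 'a trans set" where
  "bounded_steps A =
     {(encode_state p m, Some a, Sup (macro_effects A p a q m) + int m - int m', encode_state q m') | p a q m m'.
        p \<in> states A \<and> q \<in> states A \<and> m \<le> threshold A \<and> m' \<le> threshold A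
        \<and> macro_effects A p a q m \<noteq> {} \<and> bdd_above (macro_effects A p a q m)}"

definition unbounded_steps :: "('a::finite) vass1 \<Rightarrow> 'a trans set" where
  "unbounded_steps A =
     {(encode_state p m, Some a, 0, encode_state q (omega A)) | p a q m.
        p \<in> states A \<and> q \<in> states A \<and> m \<le> threshold A \<and> \<not> bdd_above (macro_effects A p a q m)}"

definition omega_steps :: "('a::finite) vass1 \<Rightarrow> 'a trans set" where
  "omega_steps A =
     {(encode_state p (omega A), Some a, 0, encode_state q (omega A)) | p a q.
        p \<in> states A \<and> q \<in> states A \<and> (\<exists>c. macro_effects A p a q c \<noteq> {})}"

definition eps_free :: "('a::finite) vass1 \<Rightarrow> 'a vass1" where
  "eps_free A =
     \<lparr>states = (\<lambda>(p, m). encode_state p m) ` (states A \<times> {..omega A}),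
      init = encode_state (init A) 0,
      final = {encode_state p m | p m. p \<in> states A
        \<and> (m \<le> threshold A \<and> can_accept A p m \<or> m = omega A \<and> (\<exists>c. can_accept A p c))},
      delta = bounded_steps A \<union> unbounded_steps A \<union> omega_steps A\<rparr>"

lemma eps_free_simps [simp]:
  "init (eps_free A) = encode_state (init A) 0"
  "delta (eps_free A) = bounded_steps A \<union> unbounded_steps A \<union> omega_steps A"
  unfolding eps_free_def by simp_all

lemma encode_state_final_iff:
  "encode_state p m \<in> final (eps_free A) \<longleftrightarrow> p \<in> states A
     \<and> (m \<le> threshold A \<and> can_accept A p m \<or> m = omega A \<and> (\<exists>c. can_accept A p c))"
  unfolding eps_free_def by auto

lemma wf_eps_free:
  fixes A :: "('a::finite) vass1"
  assumes "wf_vass A"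
  shows "wf_vass (eps_free A)"
proof -
  have fin: "finite (states A)" "init A \<in> states A"
    using assms unfolding wf_vass_def by auto
  have "bounded_steps A \<subseteq> (\<lambda>(p, a, q, m, m'). (encode_state p m, Some a,
      Sup (macro_effects A p a q m) + int m - int m', encode_state q m'))
      ` (states A \<times> UNIV \<times> states A \<times> {..threshold A} \<times> {..threshold A})"
    unfolding bounded_steps_def by (force simp: image_iff)
  moreover have "unbounded_steps A \<subseteq> (\<lambda>(p, a, q, m). (encode_state p m, Some a, 0, encode_state q (omega A)))
      ` (states A \<times> UNIV \<times> states A \<times> {..threshold A})"
    unfolding unbounded_steps_def by (force simp: image_iff)
  moreover have "omega_steps A \<subseteq> (\<lambda>(p, a, q). (encode_state p (omega A), Some a, 0, encode_state q (omega A)))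
      ` (states A \<times> UNIV \<times> states A)"
    unfolding omega_steps_def by (force simp: image_iff)
  ultimately have "finite (delta (eps_free A))"
    using fin by (auto intro: finite_subset)
  moreover have "\<forall>(p, l, d, q) \<in> delta (eps_free A). p \<in> states (eps_free A) \<and> q \<in> states (eps_free A)"
    unfolding eps_free_def bounded_steps_def unbounded_steps_def omega_steps_def by force
  ultimately show ?thesis
    using fin unfolding wf_vass_def by (auto simp: eps_free_def)
qed

lemma no_eps_eps_free: "no_eps (eps_free A)"
  unfolding no_eps_def by (auto simp: bounded_steps_def unbounded_steps_def omega_steps_def)

section \<open>Soundness\<close>

definition reaches :: "'a vass1 \<Rightarrow> 'a list \<Rightarrow> nat \<Rightarrow> int \<Rightarrow> bool" where
  "reaches A w p c \<longleftrightarrow> (\<exists>\<rho>. is_run A \<rho> \<and> run_word \<rho> = w \<and> last_state A \<rho> = p \<and> c \<le> effect \<rho>)"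

lemma reaches_init: "reaches A [] (init A) 0"
  unfolding reaches_def by (intro exI[of _ "[]"]) (simp add: is_run_def last_state_def)

lemma reaches_mono: "reaches A w p c \<Longrightarrow> c' \<le> c \<Longrightarrow> reaches A w p c'"
  unfolding reaches_def using order_trans by blast

lemma reaches_macro_step:
  assumes "reaches A w p c" "e \<in> macro_effects A p a q v" "int v \<le> c"
  shows "reaches A (w @ [a]) q (c + e)"
proof -
  obtain \<rho> where \<rho>: "is_run A \<rho>" "run_word \<rho> = w" "last_state A \<rho> = p" "c \<le> effect \<rho>"
    using assms(1) unfolding reaches_def by blast
  obtain \<pi> where \<pi>: "macro_step A p a q \<pi>" "feasible (int v) \<pi>" "e = effect \<pi>"
    using assms(2) unfolding macro_effects_def by blast
  have "feasible (effect \<rho>) \<pi>"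
    using \<pi>(2) assms(3) \<rho>(4) by (meson feasible_mono order_trans)
  then have "is_run A (\<rho> @ \<pi>)"
    using \<rho> macro_step_run[OF \<pi>(1)] by (simp add: is_run_append)
  moreover have "run_word (\<rho> @ \<pi>) = w @ [a]" "last_state A (\<rho> @ \<pi>) = q" "c + e \<le> effect (\<rho> @ \<pi>)"
    using \<rho> \<pi> macro_step_run[OF \<pi>(1)] by (simp_all add: last_state_append)
  ultimately show ?thesis
    unfolding reaches_def by blast
qed

lemma reaches_can_accept_in_lang:
  assumes "reaches A w p c" "can_accept A p v" "int v \<le> c"
  shows "w \<in> lang A"
proof -
  obtain \<rho> where \<rho>: "is_run A \<rho>" "run_word \<rho> = w" "last_state A \<rho> = p" "c \<le> effect \<rho>"
    using assms(1) unfolding reaches_def by blast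
  obtain \<phi> where \<phi>: "set \<phi> \<subseteq> eps_trans A" "chain_from p \<phi>" "end_state p \<phi> \<in> final A" "feasible (int v) \<phi>"
    using assms(2) unfolding can_accept_def by blast
  have "feasible (effect \<rho>) \<phi>"
    using \<phi>(4) assms(3) \<rho>(4) by (meson feasible_mono order_trans)
  then have "accepting A (\<rho> @ \<phi>)"
    using \<rho> \<phi> unfolding accepting_def eps_trans_def by (auto simp: is_run_append last_state_append)
  moreover have "run_word (\<rho> @ \<phi>) = w"
    using \<rho>(2) \<phi>(1) run_word_eps unfolding eps_trans_def by auto
  ultimately show ?thesis
    unfolding lang_def by blast
qed

definition realisable :: "('a::finite) vass1 \<Rightarrow> 'a list \<Rightarrow> nat \<Rightarrow> nat \<Rightarrow> int \<Rightarrow> bool" where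
  "realisable A w p m x \<longleftrightarrow>
     (m \<le> threshold A \<longrightarrow> reaches A w p (int m + x)) \<and> (m = omega A \<longrightarrow> (\<forall>N. reaches A w p N))"

lemma realisable_bounded_step:
  fixes A :: "('a::finite) vass1"
  assumes "realisable A w p m x" "0 \<le> x" "m \<le> threshold A" "m' \<le> threshold A"
    and "macro_effects A p a q m \<noteq> {}" "bdd_above (macro_effects A p a q m)"
  shows "realisable A (w @ [a]) q m' (x + (Sup (macro_effects A p a q m) + int m - int m'))"
proof -
  have "reaches A (w @ [a]) q (int m + x + Sup (macro_effects A p a q m))"
    using assms(1-3) Sup_int_mem[OF assms(5,6)] unfolding realisable_def
    by (auto intro: reaches_macro_step)
  then show ?thesis
    using assms(4) unfolding realisable_def by (simp add: algebra_simps)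
qed

lemma realisable_unbounded_step:
  fixes A :: "('a::finite) vass1"
  assumes "realisable A w p m x" "0 \<le> x" "m \<le> threshold A" "\<not> bdd_above (macro_effects A p a q m)"
  shows "realisable A (w @ [a]) q (omega A) x"
proof -
  have "reaches A (w @ [a]) q N" for N
  proof -
    obtain e where "e \<in> macro_effects A p a q m" "N - (int m + x) \<le> e"
      using assms(4) unfolding not_bdd_above_int_iff by blast
    then show ?thesis
      using assms(1-3) unfolding realisable_def by (auto intro: reaches_mono[OF reaches_macro_step])
  qed
  then show ?thesis
    unfolding realisable_def by auto
qed

lemma realisable_omega_step:
  fixes A :: "('a::finite) vass1"
  assumes "realisable A w p (omega A) x" "e \<in> macro_effects A p a q c"
  shows "realisable A (w @ [a]) q (omega A) x"
proof -
  have "reaches A (w @ [a]) q N" for N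
  proof -
    have "reaches A w p (max (int c) (N - e))"
      using assms(1) unfolding realisable_def by blast
    then show ?thesis
      using reaches_macro_step[OF _ assms(2)] reaches_mono by fastforce
  qed
  then show ?thesis
    unfolding realisable_def by auto
qed

lemma realisable_step:
  fixes A :: "('a::finite) vass1"
  assumes "realisable A w p m x" "0 \<le> x" "t \<in> delta (eps_free A)" "src t = encode_state p m"
  shows "\<exists>a q m'. lbl t = Some a \<and> tgt t = encode_state q m' \<and> realisable A (w @ [a]) q m' (x + upd t)"
proof -
  from assms(3) consider "t \<in> bounded_steps A" | "t \<in> unbounded_steps A" | "t \<in> omega_steps A"
    by auto
  then show ?thesis
  proof cases
    case 1
    then obtain a q m' where "t = (encode_state p m, Some a, Sup (macro_effects A p a q m) + int m - int m',
        encode_state q m')" "m \<le> threshold A" "m' \<le> threshold A"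
      "macro_effects A p a q m \<noteq> {}" "bdd_above (macro_effects A p a q m)"
      using assms(4) unfolding bounded_steps_def by force
    then show ?thesis
      using realisable_bounded_step[OF assms(1,2)] by auto
  next
    case 2
    then obtain a q where "t = (encode_state p m, Some a, 0, encode_state q (omega A))"
      "m \<le> threshold A" "\<not> bdd_above (macro_effects A p a q m)"
      using assms(4) unfolding unbounded_steps_def by force
    then show ?thesis
      using realisable_unbounded_step[OF assms(1,2)] by auto
  next
    case 3
    then obtain a q c where "t = (encode_state p (omega A), Some a, 0, encode_state q (omega A))"
      "m = omega A" "macro_effects A p a q c \<noteq> {}"
      using assms(4) unfolding omega_steps_def by force
    then show ?thesis
      using realisable_omega_step[of A w p x] assms(1) by auto
  qed
qed

lemma eps_free_run_realisable:
  fixes A :: "('a::finite) vass1"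
  assumes "is_run (eps_free A) \<rho>"
  shows "\<exists>p m. last_state (eps_free A) \<rho> = encode_state p m \<and> realisable A (run_word \<rho>) p m (effect \<rho>)"
  using assms
proof (induction \<rho> rule: rev_induct)
  case Nil
  have "realisable A [] (init A) 0 0"
    using reaches_init unfolding realisable_def by auto
  then show ?case
    by (auto simp: last_state_def)
next
  case (snoc t \<rho>)
  then have t: "is_run (eps_free A) \<rho>" "t \<in> delta (eps_free A)" "src t = last_state (eps_free A) \<rho>"
    "0 \<le> effect \<rho>"
    by (auto simp: is_run_append effect_run_nonneg simp del: eps_free_simps)
  then obtain p m where "last_state (eps_free A) \<rho> = encode_state p m"
    "realisable A (run_word \<rho>) p m (effect \<rho>)"
    using snoc.IH by blast
  then show ?case
    using realisable_step[of A "run_word \<rho>" p m "effect \<rho>" t] t by (auto simp: last_state_append)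
qed

lemma lang_eps_free_subset:
  fixes A :: "('a::finite) vass1"
  shows "lang (eps_free A) \<subseteq> lang A"
proof
  fix w assume "w \<in> lang (eps_free A)"
  then obtain \<rho> where \<rho>: "is_run (eps_free A) \<rho>" "last_state (eps_free A) \<rho> \<in> final (eps_free A)"
    "run_word \<rho> = w"
    unfolding lang_def accepting_def by blast
  then obtain p m where pm: "last_state (eps_free A) \<rho> = encode_state p m"
    "realisable A w p m (effect \<rho>)"
    using eps_free_run_realisable by blast
  moreover have "m \<le> threshold A \<and> can_accept A p m \<or> m = omega A \<and> (\<exists>c. can_accept A p c)"
    using \<rho>(2) pm(1) encode_state_final_iff by metis
  ultimately consider "m \<le> threshold A" "can_accept A p m" | c where "m = omega A" "can_accept A p c"
    by blast
  then show "w \<in> lang A"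
  proof cases
    case 1
    then show ?thesis
      using pm(2) effect_run_nonneg[OF \<rho>(1)] unfolding realisable_def
      by (auto intro: reaches_can_accept_in_lang)
  next
    case 2
    then show ?thesis
      using pm(2) unfolding realisable_def by (auto intro: reaches_can_accept_in_lang)
  qed
qed

section \<open>Simulating the resolver of A\<close>

definition covers :: "nat \<Rightarrow> nat \<Rightarrow> int \<Rightarrow> int \<Rightarrow> bool" where
  "covers K m x y \<longleftrightarrow> m \<le> Suc K \<and> (m \<le> K \<longrightarrow> y \<le> int m + x \<and> (m < K \<longrightarrow> x = 0))"

lemma covers_below_threshold: "covers K m x y \<Longrightarrow> m \<le> K \<Longrightarrow> 0 \<le> y \<Longrightarrow> nat y \<le> m \<or> m = K"
  unfolding covers_def by auto

lemma covers_dominated_macro_effect: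
  assumes "wf_vass A" "p \<in> states A" "q \<in> states A"
    and "covers (threshold A) m x y" "m \<le> threshold A" "0 \<le> y" "e \<in> macro_effects A p a q (nat y)"
  shows "\<exists>e' \<in> macro_effects A p a q m. e \<le> e'"
  using covers_below_threshold[OF assms(4-6)]
proof
  assume "nat y \<le> m"
  then show ?thesis
    using assms(7) macro_effects_mono[of "nat y" m A p a q] by blast
next
  assume "m = threshold A"
  then show ?thesis
    using macro_effect_dominated_at_threshold[OF assms(1-3,7)] by simp
qed

lemma covers_final:
  assumes "wf_vass A" "p \<in> states A"
    and "covers (threshold A) m x y" "0 \<le> y" "can_accept A p (nat y)"
  shows "encode_state p m \<in> final (eps_free A)"
proof (cases "m \<le> threshold A")
  case True
  then have "can_accept A p m"
    using covers_below_threshold[OF assms(3) True assms(4)] assms can_accept_mono can_accept_at_threshold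
    by blast
  then show ?thesis
    using True assms(2) encode_state_final_iff by blast
next
  case False
  then have "m = omega A"
    using assms(3) unfolding covers_def by simp
  then show ?thesis
    using assms(2,5) encode_state_final_iff by blast
qed

definition eps_free_step :: "('a::finite) vass1 \<Rightarrow> nat \<Rightarrow> nat \<Rightarrow> nat \<Rightarrow> int \<Rightarrow> 'a \<Rightarrow> 'a trans" where
  "eps_free_step A p q m x a =
     (if m \<le> threshold A \<and> bdd_above (macro_effects A p a q m) then
        let M = Sup (macro_effects A p a q m); m' = min (nat (int m + x + M)) (threshold A)
        in (encode_state p m, Some a, M + int m - int m', encode_state q m')
      else (encode_state p m, Some a, 0, encode_state q (omega A)))"

lemma eps_free_step_covers:
  fixes A :: "('a::finite) vass1"
  assumes wf: "wf_vass A" and pq: "p \<in> states A" "q \<in> states A"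
    and cov: "covers (threshold A) m x y" and "0 \<le> x" "0 \<le> y" "0 \<le> y + e"
    and e: "e \<in> macro_effects A p a q (nat y)"
  obtains d m' where "eps_free_step A p q m x a = (encode_state p m, Some a, d, encode_state q m')"
    "eps_free_step A p q m x a \<in> delta (eps_free A)" "0 \<le> x + d" "covers (threshold A) m' (x + d) (y + e)"
proof (cases "m \<le> threshold A \<and> bdd_above (macro_effects A p a q m)")
  case True
  define M where "M = Sup (macro_effects A p a q m)"
  define m' where "m' = min (nat (int m + x + M)) (threshold A)"
  obtain e' where e': "e' \<in> macro_effects A p a q m" "e \<le> e'"
    using covers_dominated_macro_effect[OF wf pq cov _ \<open>0 \<le> y\<close> e] True by blast
  then have "e \<le> M"
    using True cSup_upper unfolding M_def by fastforce
  moreover have "y \<le> int m + x"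
    using cov True unfolding covers_def by simp
  ultimately have "y + e \<le> int m + x + M" "m' < threshold A \<Longrightarrow> int m' = int m + x + M"
    using \<open>0 \<le> y + e\<close> unfolding m'_def by auto
  moreover have "int m' \<le> int m + x + M"
    unfolding m'_def using \<open>y + e \<le> int m + x + M\<close> \<open>0 \<le> y + e\<close> by linarith
  ultimately have "0 \<le> x + (M + int m - int m')" "covers (threshold A) m' (x + (M + int m - int m')) (y + e)"
    unfolding covers_def m'_def by auto
  moreover have "eps_free_step A p q m x a = (encode_state p m, Some a, M + int m - int m', encode_state q m')"
    using True unfolding eps_free_step_def M_def m'_def Let_def by simp
  moreover have "\<dots> \<in> bounded_steps A"
    using True pq e'(1) unfolding bounded_steps_def M_def by (auto simp: m'_def)
  ultimately show ?thesis
    using that by simp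
next
  case False
  have step: "eps_free_step A p q m x a = (encode_state p m, Some a, 0, encode_state q (omega A))"
    using False unfolding eps_free_step_def by auto
  have "covers (threshold A) (omega A) x (y + e)"
    unfolding covers_def by simp
  moreover have "eps_free_step A p q m x a \<in> unbounded_steps A \<union> omega_steps A"
  proof (cases "m \<le> threshold A")
    case True
    then show ?thesis
      unfolding step unbounded_steps_def using False pq by auto
  next
    case False
    then have "m = omega A"
      using cov unfolding covers_def by simp
    then show ?thesis
      unfolding step omega_steps_def using pq e by auto
  qed
  ultimately show ?thesis
    using that step \<open>0 \<le> x\<close> by simp
qed

lemma resolver_prefix_snoc: "resolver_prefix r (u @ [a]) = resolver_prefix r u @ r (resolver_prefix r u) a"
  by (simp add: resolver_prefix_def)

lemma run_word_resolver_prefix: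
  assumes "valid_resolver A r fin"
  shows "run_word (resolver_prefix r u) = u"
proof (induction u rule: rev_induct)
  case (snoc a u)
  obtain es t where "r (resolver_prefix r u) a = es @ [t]" "\<forall>e\<in>set es. lbl e = None" "lbl t = Some a"
    using assms unfolding valid_resolver_def by blast
  then show ?case
    using snoc run_word_eps by (simp add: resolver_prefix_snoc)
qed (simp add: resolver_prefix_def)

(* A's resolver is replayed on the word read so far to learn A's next macro step. The
   fallback only makes the resolver total; it is never taken on prefixes of words of lang A. *)
definition eps_free_resolver :: "('a::finite) vass1 \<Rightarrow> ('a trans list \<Rightarrow> 'a \<Rightarrow> 'a trans list)
    \<Rightarrow> 'a trans list \<Rightarrow> 'a \<Rightarrow> 'a trans list" where
  "eps_free_resolver A r \<rho> a =
     (let \<rho>\<^sub>A = resolver_prefix r (run_word \<rho>);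
          t = eps_free_step A (last_state A \<rho>\<^sub>A) (tgt (last (r \<rho>\<^sub>A a)))
                (snd (prod_decode (last_state (eps_free A) \<rho>))) (effect \<rho>) a
      in [if t \<in> delta (eps_free A) \<and> lbl t = Some a then t
          else SOME t. t \<in> delta (eps_free A) \<and> lbl t = Some a])"

lemma eps_free_has_letter_trans:
  fixes A :: "('a::finite) vass1"
  assumes "wf_vass A" "t \<in> delta A" "lbl t = Some a"
  shows "\<exists>t'. t' \<in> delta (eps_free A) \<and> lbl t' = Some a"
proof -
  have "macro_step A (src t) a (tgt t) [t]"
    using assms(2,3) macro_step_snoc_iff[of A "src t" a "tgt t" "[]" t] by simp
  then have "upd t \<in> macro_effects A (src t) a (tgt t) (nat \<bar>upd t\<bar>)"
    unfolding macro_effects_def by force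
  then have "(encode_state (src t) (omega A), Some a, 0, encode_state (tgt t) (omega A)) \<in> omega_steps A"
    using wf_vass_trans_states[OF assms(1,2)] unfolding omega_steps_def by blast
  then show ?thesis
    by auto
qed

lemma eps_free_resolver_valid:
  fixes A :: "('a::finite) vass1"
  assumes "wf_vass A" "valid_resolver A r fin"
  shows "valid_resolver (eps_free A) (eps_free_resolver A r) (\<lambda>_. [])"
  unfolding valid_resolver_def
proof (intro conjI allI)
  fix \<rho> a
  obtain es t where "t \<in> delta A" "lbl t = Some a"
    using assms(2) unfolding valid_resolver_def by blast
  then have "\<exists>t'. t' \<in> delta (eps_free A) \<and> lbl t' = Some a"
    using eps_free_has_letter_trans[OF assms(1)] by blast
  then have "(SOME t'. t' \<in> delta (eps_free A) \<and> lbl t' = Some a) \<in> delta (eps_free A)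
      \<and> lbl (SOME t'. t' \<in> delta (eps_free A) \<and> lbl t' = Some a) = Some a"
    by (rule someI_ex)
  then show "\<exists>es t. eps_free_resolver A r \<rho> a = es @ [t] \<and> set es \<subseteq> delta (eps_free A)
      \<and> (\<forall>e\<in>set es. lbl e = None) \<and> t \<in> delta (eps_free A) \<and> lbl t = Some a"
    unfolding eps_free_resolver_def Let_def by (simp del: eps_free_simps)
qed auto

lemma resolver_step_macro_step:
  assumes "valid_resolver A r fin" "is_run A (\<rho> @ r \<rho> a)"
  shows "macro_step A (last_state A \<rho>) a (last_state A (\<rho> @ r \<rho> a)) (r \<rho> a)"
proof -
  obtain es t where "r \<rho> a = es @ [t]" "set es \<subseteq> delta A" "\<forall>e\<in>set es. lbl e = None"
    "t \<in> delta A" "lbl t = Some a"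
    using assms(1) unfolding valid_resolver_def by blast
  then show ?thesis
    using assms(2) by (auto simp: is_run_append last_state_append macro_step_snoc_iff eps_trans_def)
qed

lemma eps_free_resolver_eq_step:
  assumes "last_state (eps_free A) \<rho> = encode_state (last_state A (resolver_prefix r (run_word \<rho>))) m"
    and "t = eps_free_step A (last_state A (resolver_prefix r (run_word \<rho>)))
      (last_state A (resolver_prefix r (run_word \<rho> @ [a]))) m (effect \<rho>) a"
    and "t \<in> delta (eps_free A)" "lbl t = Some a" "r (resolver_prefix r (run_word \<rho>)) a \<noteq> []"
  shows "eps_free_resolver A r \<rho> a = [t]"
  using assms unfolding eps_free_resolver_def Let_def
  by (simp add: resolver_prefix_snoc last_state_append end_state_eq_last del: eps_free_simps)

lemma eps_free_resolver_covers:
  fixes A :: "('a::finite) vass1"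
  assumes wf: "wf_vass A" and r: "valid_resolver A r fin" and "is_run A (resolver_prefix r u)"
  shows "is_run (eps_free A) (resolver_prefix (eps_free_resolver A r) u)
    \<and> (\<exists>m. last_state (eps_free A) (resolver_prefix (eps_free_resolver A r) u)
             = encode_state (last_state A (resolver_prefix r u)) m
        \<and> covers (threshold A) m (effect (resolver_prefix (eps_free_resolver A r) u))
            (effect (resolver_prefix r u)))"
  using assms(3)
proof (induction u rule: rev_induct)
  case Nil
  then show ?case
    by (simp add: resolver_prefix_def is_run_def last_state_def covers_def)
next
  case (snoc a u)
  define \<rho>\<^sub>A \<rho>\<^sub>B p q where "\<rho>\<^sub>A = resolver_prefix r u"
    and "\<rho>\<^sub>B = resolver_prefix (eps_free_resolver A r) u"
    and "p = last_state A \<rho>\<^sub>A" and "q = last_state A (resolver_prefix r (u @ [a]))"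
  have run\<^sub>A: "is_run A (\<rho>\<^sub>A @ r \<rho>\<^sub>A a)"
    using snoc.prems unfolding \<rho>\<^sub>A_def resolver_prefix_snoc .
  then have "is_run A \<rho>\<^sub>A"
    by (simp add: is_run_append)
  then obtain m where run\<^sub>B: "is_run (eps_free A) \<rho>\<^sub>B"
    and last\<^sub>B: "last_state (eps_free A) \<rho>\<^sub>B = encode_state p m"
    and cov: "covers (threshold A) m (effect \<rho>\<^sub>B) (effect \<rho>\<^sub>A)"
    using snoc.IH unfolding \<rho>\<^sub>A_def \<rho>\<^sub>B_def p_def by blast
  have step: "macro_step A p a q (r \<rho>\<^sub>A a)"
    using resolver_step_macro_step[OF r run\<^sub>A] unfolding p_def q_def \<rho>\<^sub>A_def resolver_prefix_snoc .
  then have e: "effect (r \<rho>\<^sub>A a) \<in> macro_effects A p a q (nat (effect \<rho>\<^sub>A))"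
    using run\<^sub>A effect_run_nonneg[OF \<open>is_run A \<rho>\<^sub>A\<close>]
    unfolding macro_effects_def by (auto simp: is_run_append)
  have "p \<in> states A" "q \<in> states A"
    using last_state_in_states[OF wf] snoc.prems \<open>is_run A \<rho>\<^sub>A\<close> unfolding p_def q_def by blast+
  moreover have "0 \<le> effect \<rho>\<^sub>B" "0 \<le> effect \<rho>\<^sub>A" "0 \<le> effect \<rho>\<^sub>A + effect (r \<rho>\<^sub>A a)"
    using run\<^sub>B \<open>is_run A \<rho>\<^sub>A\<close> effect_run_nonneg[OF run\<^sub>A] by (simp_all add: effect_run_nonneg)
  ultimately obtain d m' where
    t: "eps_free_step A p q m (effect \<rho>\<^sub>B) a = (encode_state p m, Some a, d, encode_state q m')"
      "eps_free_step A p q m (effect \<rho>\<^sub>B) a \<in> delta (eps_free A)" "0 \<le> effect \<rho>\<^sub>B + d"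
      "covers (threshold A) m' (effect \<rho>\<^sub>B + d) (effect \<rho>\<^sub>A + effect (r \<rho>\<^sub>A a))"
    using eps_free_step_covers[OF wf _ _ cov _ _ _ e] by blast
  have "run_word \<rho>\<^sub>B = u"
    unfolding \<rho>\<^sub>B_def by (rule run_word_resolver_prefix[OF eps_free_resolver_valid[OF wf r]])
  moreover have "r \<rho>\<^sub>A a \<noteq> []"
    using step unfolding macro_step_def by auto
  ultimately have "eps_free_resolver A r \<rho>\<^sub>B a = [(encode_state p m, Some a, d, encode_state q m')]"
    using t(1,2) last\<^sub>B
    by (intro eps_free_resolver_eq_step) (auto simp: p_def q_def \<rho>\<^sub>A_def simp del: eps_free_simps)
  then show ?case
    using run\<^sub>B last\<^sub>B t \<open>0 \<le> effect \<rho>\<^sub>B\<close>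
    unfolding \<rho>\<^sub>B_def \<rho>\<^sub>A_def q_def resolver_prefix_snoc
    by (auto simp: is_run_append last_state_append \<rho>\<^sub>B_def[symmetric] \<rho>\<^sub>A_def[symmetric] simp del: eps_free_simps)
qed

lemma eps_free_resolver_accepts:
  fixes A :: "('a::finite) vass1"
  assumes wf: "wf_vass A" and r: "valid_resolver A r fin" and acc: "accepting A (resolver_run r fin w)"
  shows "accepting (eps_free A) (resolver_run (eps_free_resolver A r) (\<lambda>_. []) w)"
proof -
  define \<rho>\<^sub>A \<phi> where "\<rho>\<^sub>A = resolver_prefix r w" and "\<phi> = fin \<rho>\<^sub>A"
  have run: "is_run A \<rho>\<^sub>A" "chain_from (last_state A \<rho>\<^sub>A) \<phi>" "feasible (effect \<rho>\<^sub>A) \<phi>"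
    and "end_state (last_state A \<rho>\<^sub>A) \<phi> \<in> final A"
    using acc unfolding accepting_def resolver_run_def \<rho>\<^sub>A_def \<phi>_def
    by (auto simp: is_run_append last_state_append)
  moreover have "set \<phi> \<subseteq> eps_trans A"
    using r unfolding valid_resolver_def eps_trans_def \<phi>_def by blast
  ultimately have "can_accept A (last_state A \<rho>\<^sub>A) (nat (effect \<rho>\<^sub>A))"
    using effect_run_nonneg[OF run(1)] unfolding can_accept_def by auto
  moreover obtain m where
    "is_run (eps_free A) (resolver_prefix (eps_free_resolver A r) w)"
    "last_state (eps_free A) (resolver_prefix (eps_free_resolver A r) w) = encode_state (last_state A \<rho>\<^sub>A) m"
    "covers (threshold A) m (effect (resolver_prefix (eps_free_resolver A r) w)) (effect \<rho>\<^sub>A)"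
    using eps_free_resolver_covers[OF wf r run(1)[unfolded \<rho>\<^sub>A_def]] unfolding \<rho>\<^sub>A_def by blast
  ultimately show ?thesis
    using covers_final[OF wf last_state_in_states[OF wf run(1)]] effect_run_nonneg[OF run(1)]
    unfolding accepting_def resolver_run_def by simp
qed

theorem eps_elimination:
  fixes A :: "('a::finite) vass1"
  assumes wf: "wf_vass A" and "history_deterministic A"
  shows "wf_vass (eps_free A) \<and> no_eps (eps_free A) \<and> history_deterministic (eps_free A)
    \<and> lang (eps_free A) = lang A"
proof -
  obtain r fin where r: "valid_resolver A r fin" and acc: "\<forall>w \<in> lang A. accepting A (resolver_run r fin w)"
    using assms(2) unfolding history_deterministic_def by blast
  let ?r = "eps_free_resolver A r"
  have valid: "valid_resolver (eps_free A) ?r (\<lambda>_. [])"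
    by (rule eps_free_resolver_valid[OF wf r])
  have acc': "accepting (eps_free A) (resolver_run ?r (\<lambda>_. []) w)" if "w \<in> lang A" for w
    using eps_free_resolver_accepts[OF wf r] acc that by blast
  have "run_word (resolver_run ?r (\<lambda>_. []) w) = w" for w
    using run_word_resolver_prefix[OF valid] unfolding resolver_run_def by simp
  then have "lang A \<subseteq> lang (eps_free A)"
    using acc' unfolding lang_def by blast
  then have lang: "lang (eps_free A) = lang A"
    using lang_eps_free_subset by blast
  have "history_deterministic (eps_free A)"
    unfolding history_deterministic_def lang using valid acc' by blast
  then show ?thesis
    using wf_eps_free[OF wf] no_eps_eps_free lang by blast
qed

theorem mainTheorem6:
  shows "(CH1 :: ('a::finite) list set set) = CH1_eps"
proof
  show "(CH1 :: 'a list set set) \<subseteq> CH1_eps"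
    unfolding CH1_def CH1_eps_def by blast
  show "(CH1_eps :: 'a list set set) \<subseteq> CH1"
    unfolding CH1_def CH1_eps_def using eps_elimination by blast
qed

end
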